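(* Let $n\ge2$ and $\lambda$ a partition of $n$ with $\lambda=\lambda'$. Let $R_\lambda:B_n\to\mathrm{GL}(V_\lambda)$ be the irreducible representation of $B_n$ over $\mathbb{Q}(s)$ afforded by the Hecke algebra $H_n(s)$ indexed by $\lambda$, and let $\epsilon:B_n\to\{\pm1\}$ be the character $\sigma_i\mapsto-1$. If $\epsilon$ occurs in the symmetric square $S^2R_\lambda$, then the corresponding nonzero symmetric bilinear form $\beta_\lambda$ on $V_\lambda$ (satisfying $\beta_\lambda(R_\lambda(b)x,R_\lambda(b)y)=\epsilon(b)\beta_\lambda(x,y)$) is hyperbolic over $\mathbb{Q}(s)$.
   Context: $s$ is an indeterminate. $B_n$ is the braid group with Artin generators $\sigma_1,\dots,\sigma_{n-1}$. $H_n(s)$ is the quotient of $\mathbb{Q}(s)B_n$ by $(\sigma_1-s)(\sigma_1+s^{-1})=0$; it is split semisimple over $\mathbb{Q}(s)$, with irreducible representations $R_\lambda$ indexed by partitions $\lambda$ of $n$ (deforming the Specht modules of $\mathfrak{S}_n$), and the restriction of $R_\lambda$ to $B_{n-1}$ is $\bigoplus_{\mu\nearrow\lambda}R_\mu$ (Young's rule, $\mu\nearrow\lambda$ meaning $\lambda$ is obtained from $\mu$ by adding one box). $\lambda'$ denotes the transposed partition. A nondegenerate symmetric bilinear form is hyperbolic if the quadratic space is an orthogonal sum of hyperbolic planes. *)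

theory Defs
  imports "HOL-Computational_Algebra.Polynomial" "HOL-Computational_Algebra.Fraction_Field"
begin

type_synonym Qs = "rat poly fract"

definition s_ind :: Qs where
  "s_ind = Fract [:0, 1:] 1"

text \<open>Partitions of n as weakly decreasing lists of positive integers; cells (row, column), 0-based.\<close>
definition is_partition :: "nat \<Rightarrow> nat list \<Rightarrow> bool" where
  "is_partition n lam \<longleftrightarrow> sorted_wrt (\<ge>) lam \<and> (\<forall>x\<in>set lam. 0 < x) \<and> sum_list lam = n"

definition diagram :: "nat list \<Rightarrow> (nat \<times> nat) set" where
  "diagram lam = {(i, j). i < length lam \<and> j < lam ! i}"

definition conj_partition :: "nat list \<Rightarrow> nat list" where
  "conj_partition lam =
     map (\<lambda>j. length (filter (\<lambda>r. j < r) lam)) [0..<(if lam = [] then 0 else hd lam)]"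

text \<open>Standard Young tableaux of shape lam: a tableau is the list whose k-th entry is the
  cell containing the number k+1; entries increase along rows and down columns.\<close>
definition syt :: "nat \<Rightarrow> nat list \<Rightarrow> (nat \<times> nat) list set" where
  "syt n lam = {ts. length ts = n \<and> distinct ts \<and> set ts = diagram lam \<and>
     (\<forall>k<n. \<forall>l<n. fst (ts ! k) \<le> fst (ts ! l) \<and> snd (ts ! k) \<le> snd (ts ! l) \<longrightarrow> k \<le> l)}"

definition content :: "nat \<times> nat \<Rightarrow> int" where
  "content c = int (snd c) - int (fst c)"

text \<open>Axial distance between the boxes containing i+1 and i+2 (0-based positions i, i+1).\<close>
definition axial :: "(nat \<times> nat) list \<Rightarrow> nat \<Rightarrow> int" where
  "axial ts i = content (ts ! Suc i) - content (ts ! i)"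

definition swap_tab :: "(nat \<times> nat) list \<Rightarrow> nat \<Rightarrow> (nat \<times> nat) list" where
  "swap_tab ts i = ts[i := ts ! Suc i, Suc i := ts ! i]"

definition qdiag :: "int \<Rightarrow> Qs" where
  "qdiag d = s_ind powi d * (s_ind - inverse s_ind) / (s_ind powi d - s_ind powi (- d))"

text \<open>Young's q-seminormal form of R_lambda (Hoefsmit): the basis of V_lambda is indexed by the
  standard tableaux; hecke_gen n lam i u t is the coefficient of v_u in R_lambda(sigma_(i+1)) v_t,
  for i < n - 1.  The generators satisfy (sigma - s)(sigma + s^-1) = 0 and the braid relations.\<close>
definition hecke_gen :: "nat \<Rightarrow> nat list \<Rightarrow> nat \<Rightarrow> (nat \<times> nat) list \<Rightarrow> (nat \<times> nat) list \<Rightarrow> Qs" where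
  "hecke_gen n lam i u t =
     (if t \<in> syt n lam \<and> u \<in> syt n lam then
        (if u = t then qdiag (axial t i)
         else if u = swap_tab t i then
           (if axial t i > 0 then 1 else 1 + qdiag (axial t i) * qdiag (- axial t i))
         else 0)
      else 0)"

definition mat_act :: "'b set \<Rightarrow> ('b \<Rightarrow> 'b \<Rightarrow> 'a::field) \<Rightarrow> ('b \<Rightarrow> 'a) \<Rightarrow> ('b \<Rightarrow> 'a)" where
  "mat_act I M x = (\<lambda>u. \<Sum>t\<in>I. M u t * x t)"

definition bil :: "'b set \<Rightarrow> ('b \<Rightarrow> 'b \<Rightarrow> 'a::field) \<Rightarrow> ('b \<Rightarrow> 'a) \<Rightarrow> ('b \<Rightarrow> 'a) \<Rightarrow> 'a" where
  "bil I B x y = (\<Sum>t\<in>I. \<Sum>u\<in>I. x t * B t u * y u)"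

text \<open>Hyperbolic: the space is an orthogonal sum of hyperbolic planes, i.e. it is spanned by
  vectors e_1..e_m, f_1..f_m with b(e_j,e_k) = b(f_j,f_k) = 0 and b(e_j,f_k) = delta_jk
  (such vectors are then automatically a basis and the form nondegenerate).\<close>
definition hyperbolic :: "'b set \<Rightarrow> ('b \<Rightarrow> 'b \<Rightarrow> 'a::field) \<Rightarrow> bool" where
  "hyperbolic I B \<longleftrightarrow> (\<exists>(m::nat) e f.
     (\<forall>x. \<exists>a b. \<forall>t\<in>I. x t = (\<Sum>j<m. a j * e j t + b j * f j t)) \<and>
     (\<forall>j<m. \<forall>k<m. bil I B (e j) (e k) = 0 \<and> bil I B (f j) (f k) = 0 \<and>
                   bil I B (e j) (f k) = (if j = k then 1 else 0)))"

end

theory Submission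
  imports Defs
begin

text \<open>In Young's seminormal basis \<open>v_t\<close>, indexed by the standard tableaux \<open>t\<close>, the Jucys--Murphy
  elements \<open>L_1 = 1\<close>, \<open>L_(k+1) = \<sigma>_k L_k \<sigma>_k\<close> act diagonally: \<open>L_k v_t = s^(2 c_k(t)) v_t\<close>, where
  \<open>c_k(t)\<close> is the content of the box of \<open>t\<close> containing \<open>k\<close>. Being products of an even number of
  generators, they preserve \<open>\<beta>\<close>, so \<open>\<beta>(v_t, v_u) \<noteq> 0\<close> forces \<open>c_k(u) = - c_k(t)\<close> for all \<open>k\<close>, i.e.
  \<open>u = t'\<close>, the transposed tableau (standard because \<open>\<lambda> = \<lambda>'\<close>). The \<open>\<epsilon>\<close>-invariance under \<open>\<sigma>_i\<close>
  shows that \<open>\<beta>(v_t, v_t')\<close> vanishes iff \<open>\<beta>(v_u, v_u')\<close> does, for \<open>u\<close> obtained from \<open>t\<close> by swapping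
  \<open>i\<close> and \<open>i+1\<close>; as such swaps connect all standard tableaux and \<open>\<beta> \<noteq> 0\<close>, every \<open>\<beta>(v_t, v_t')\<close> is
  nonzero. Since \<open>2\<close> lies in the first row of exactly one of \<open>t\<close>, \<open>t'\<close>, the planes spanned by
  \<open>v_t, v_t'\<close> for the tableaux \<open>t\<close> with \<open>2\<close> in the first row are a hyperbolic decomposition.\<close>

section \<open>Rational functions in \<open>s\<close>\<close>

lemma s_ind_power: "s_ind ^ m = Fract ([:0, 1:] ^ m) 1"
  by (induction m) (simp_all add: s_ind_def One_fract_def)

lemma s_ind_nonzero: "s_ind \<noteq> 0"
  by (simp add: s_ind_def Zero_fract_def eq_fract)

lemma s_ind_power_eq_1: "s_ind ^ m = 1 \<Longrightarrow> m = 0"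
proof -
  assume "s_ind ^ m = 1"
  hence "[:0, 1:] ^ m = (1::rat poly)" by (simp add: s_ind_power One_fract_def eq_fract)
  hence "degree ([:0, 1:] ^ m :: rat poly) = 0" by simp
  thus "m = 0" by (simp add: degree_power_eq)
qed

lemma s_ind_powi_eq_1: "s_ind powi m = 1 \<Longrightarrow> m = 0"
proof (cases "m \<ge> 0")
  case True
  assume "s_ind powi m = 1"
  hence "s_ind ^ nat m = 1" using True by (simp add: power_int_def)
  thus ?thesis using s_ind_power_eq_1 True by fastforce
next
  case False
  assume "s_ind powi m = 1"
  hence "inverse (s_ind ^ nat (-m)) = 1" using False by (simp add: power_int_def power_inverse)
  hence "s_ind ^ nat (-m) = 1" by (rule iffD1[OF inverse_eq_1_iff])
  thus ?thesis using s_ind_power_eq_1 False by fastforce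
qed

lemma s_ind_powi_inj: "s_ind powi a = s_ind powi b \<Longrightarrow> a = b"
proof -
  assume h: "s_ind powi a = s_ind powi b"
  have "s_ind powi (a - b) = s_ind powi a / s_ind powi b"
    using s_ind_nonzero by (simp add: power_int_diff)
  also have "\<dots> = 1" using h s_ind_nonzero by simp
  finally show "a = b" using s_ind_powi_eq_1 by fastforce
qed

lemma s_ind_minus_inverse_nonzero: "s_ind - inverse s_ind \<noteq> 0"
proof
  assume "s_ind - inverse s_ind = 0"
  hence "s_ind powi 1 = s_ind powi (-1)" by (simp add: power_int_minus)
  thus False using s_ind_powi_inj by fastforce
qed

lemma qdiag_uminus: "qdiag d + s_ind powi (2 * d) * qdiag (- d) = 0"
proof -
  define X where "X = s_ind powi d"
  define c where "c = s_ind - inverse s_ind"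
  have X0: "X \<noteq> 0" using s_ind_nonzero by (simp add: X_def)
  have inv: "s_ind powi (- d) = inverse X" by (simp add: X_def power_int_minus)
  have sq: "s_ind powi (2 * d) = X * X"
    by (simp add: X_def power_int_mult power2_eq_square[symmetric] mult.commute[of 2])
  have cancel: "X * X * inverse X = X" using X0 by simp
  have "qdiag d = X * c / (X - inverse X)"
    unfolding qdiag_def X_def c_def by (simp add: power_int_minus)
  moreover have "s_ind powi (2 * d) * qdiag (- d) = - (X * c / (X - inverse X))"
  proof -
    have "inverse X - X = - (X - inverse X)" by simp
    thus ?thesis
      unfolding qdiag_def inv sq minus_minus X_def[symmetric] c_def[symmetric]
      by (simp only: divide_minus_right mult_minus_right times_divide_eq_right
          mult.assoc[symmetric] cancel)
  qed
  ultimately show ?thesis by simp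
qed

lemma qdiag_zero: "qdiag 0 = 0"
  unfolding qdiag_def by simp

lemma qdiag_nonzero: "d \<noteq> 0 \<Longrightarrow> qdiag d \<noteq> 0"
proof -
  assume d: "d \<noteq> 0"
  have "s_ind powi d \<noteq> s_ind powi (- d)" using s_ind_powi_inj d by fastforce
  thus ?thesis
    unfolding qdiag_def using s_ind_nonzero s_ind_minus_inverse_nonzero by simp
qed

lemma qdiag_one: "qdiag 1 = s_ind"
  unfolding qdiag_def using s_ind_minus_inverse_nonzero by (simp add: power_int_minus)

lemma qdiag_minus_one: "qdiag (- 1) = - inverse s_ind"
proof -
  have e: "inverse s_ind - s_ind = - (s_ind - inverse s_ind)" by simp
  have "qdiag (- 1) = inverse s_ind * (s_ind - inverse s_ind) / (inverse s_ind - s_ind)"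
    unfolding qdiag_def by (simp add: power_int_minus)
  also have "\<dots> = - inverse s_ind"
    unfolding e divide_minus_right using s_ind_minus_inverse_nonzero by simp
  finally show ?thesis .
qed

lemma qdiag_square_if_unit: "d = 1 \<or> d = - 1 \<Longrightarrow> qdiag d * qdiag d = s_ind powi (2 * d)"
  using s_ind_nonzero
  by (auto simp: qdiag_one qdiag_minus_one power_int_minus power_int_mult
      power2_eq_square[symmetric] power_inverse)

section \<open>Bilinear forms\<close>

definition unit_vec :: "'b \<Rightarrow> 'b \<Rightarrow> 'a::zero_neq_one" where
  "unit_vec a = (\<lambda>v. if v = a then 1 else 0)"

lemma sum_mult_unit_vec:
  "finite S \<Longrightarrow> (\<Sum>t\<in>S. f t * unit_vec a t) = (if a \<in> S then f a else (0::'a::semiring_1))"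
proof -
  assume S: "finite S"
  have "(\<Sum>t\<in>S. f t * unit_vec a t) = (\<Sum>t\<in>S. if t = a then f t else 0)"
    by (intro sum.cong refl) (simp add: unit_vec_def)
  thus ?thesis using S by (simp add: sum.delta')
qed

lemma sum_unit_vec_mult:
  "finite S \<Longrightarrow> (\<Sum>t\<in>S. unit_vec a t * f t) = (if a \<in> S then f a else (0::'a::comm_semiring_1))"
  using sum_mult_unit_vec[of S f a] by (simp add: mult.commute)

lemma bil_cong:
  "(\<And>v. v \<in> S \<Longrightarrow> x v = x' v) \<Longrightarrow> (\<And>v. v \<in> S \<Longrightarrow> y v = y' v) \<Longrightarrow> bil S B x y = bil S B x' y'"
  unfolding bil_def by (intro sum.cong refl) simp

lemma bil_linear_left: "bil S B (\<lambda>v. a * x v + b * y v) z = a * bil S B x z + b * bil S B y z"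
  unfolding bil_def by (simp add: algebra_simps sum.distrib sum_distrib_left)

lemma bil_linear_right: "bil S B z (\<lambda>v. a * x v + b * y v) = a * bil S B z x + b * bil S B z y"
  unfolding bil_def by (simp add: algebra_simps sum.distrib sum_distrib_left)

lemma bil_scale_left: "bil S B (\<lambda>v. a * x v) z = a * bil S B x z"
  unfolding bil_def by (simp add: algebra_simps sum_distrib_left)

lemma bil_scale_right: "bil S B z (\<lambda>v. a * x v) = a * bil S B z x"
  unfolding bil_def by (simp add: algebra_simps sum_distrib_left)

lemma bil_unit_vec: "finite S \<Longrightarrow> a \<in> S \<Longrightarrow> b \<in> S \<Longrightarrow> bil S B (unit_vec a) (unit_vec b) = B a b"
  unfolding bil_def by (simp add: sum_mult_unit_vec sum_unit_vec_mult)

lemma sum_unit_vec_involution: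
  fixes x :: "'b \<Rightarrow> 'a::comm_semiring_1" and g :: "nat \<Rightarrow> 'b"
  assumes g: "bij_betw g {..<m} E"
    and half: "E \<subseteq> I" "\<And>t. t \<in> I \<Longrightarrow> \<sigma> t \<in> E \<longleftrightarrow> t \<notin> E"
    and inv_inv: "\<And>t. \<sigma> (\<sigma> t) = t" and t: "t \<in> I"
  shows "(\<Sum>j<m. x (g j) * unit_vec (g j) t + x (\<sigma> (g j)) * unit_vec (\<sigma> (g j)) t) = x t"
proof -
  have fin: "finite E" using bij_betw_finite[OF g] by simp
  have "(\<Sum>j<m. x (g j) * unit_vec (g j) t + x (\<sigma> (g j)) * unit_vec (\<sigma> (g j)) t)
      = (\<Sum>u\<in>E. x u * unit_vec u t + x (\<sigma> u) * unit_vec (\<sigma> u) t)"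
    using sum.reindex_bij_betw[OF g, of "\<lambda>u. x u * unit_vec u t + x (\<sigma> u) * unit_vec (\<sigma> u) t"] .
  also have "\<dots> = (\<Sum>u\<in>E. if u = t then x t else 0) + (\<Sum>u\<in>E. if u = \<sigma> t then x t else 0)"
  proof -
    have "\<sigma> u = t \<longleftrightarrow> u = \<sigma> t" for u using inv_inv by metis
    hence "x (\<sigma> u) * unit_vec (\<sigma> u) t = (if u = \<sigma> t then x t else 0)" for u
      using inv_inv by (auto simp: unit_vec_def)
    moreover have "x u * unit_vec u t = (if u = t then x t else 0)" for u
      by (simp add: unit_vec_def)
    ultimately show ?thesis by (simp add: sum.distrib)
  qed
  also have "\<dots> = x t" using fin half t by (auto simp: sum.delta')
  finally show ?thesis .
qed

text \<open>A form whose Gram matrix is supported on the graph of a fixed-point free involution \<open>\<sigma>\<close>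
  is hyperbolic: for \<open>t\<close> in a half \<open>E\<close> of the orbits, \<open>v_t\<close> and \<open>v_(\<sigma> t) / B t (\<sigma> t)\<close> span a
  hyperbolic plane.\<close>
lemma hyperbolic_if_supported_on_involution:
  fixes B :: "'b \<Rightarrow> 'b \<Rightarrow> 'a::field"
  assumes fin: "finite I"
    and inv_in: "\<And>t. t \<in> I \<Longrightarrow> \<sigma> t \<in> I" and inv_inv: "\<And>t. \<sigma> (\<sigma> t) = t"
    and half: "E \<subseteq> I" "\<And>t. t \<in> I \<Longrightarrow> \<sigma> t \<in> E \<longleftrightarrow> t \<notin> E"
    and support: "\<And>t u. t \<in> I \<Longrightarrow> u \<in> I \<Longrightarrow> u \<noteq> \<sigma> t \<Longrightarrow> B t u = 0"
    and diag: "\<And>t. t \<in> I \<Longrightarrow> B t (\<sigma> t) \<noteq> 0"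
  shows "hyperbolic I B"
proof -
  define m where "m = card E"
  obtain g where g: "bij_betw g {..<m} E"
    using ex_bij_betw_nat_finite[of E] finite_subset[OF half(1) fin] unfolding m_def
    by (auto simp: atLeast0LessThan)
  have gE: "\<And>j. j < m \<Longrightarrow> g j \<in> E" using g unfolding bij_betw_def by auto
  have gI: "\<And>j. j < m \<Longrightarrow> g j \<in> I" using gE half(1) by auto
  have g_inj: "\<And>j k. j < m \<Longrightarrow> k < m \<Longrightarrow> g j = g k \<Longrightarrow> j = k"
    using g unfolding bij_betw_def inj_on_def by auto
  define c where "c j = inverse (B (g j) (\<sigma> (g j)))" for j
  define e :: "nat \<Rightarrow> 'b \<Rightarrow> 'a" where "e j = unit_vec (g j)" for j
  define f where "f j = (\<lambda>v. c j * unit_vec (\<sigma> (g j)) v)" for j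
  have span: "\<exists>a b. \<forall>t\<in>I. x t = (\<Sum>j<m. a j * e j t + b j * f j t)" for x :: "'b \<Rightarrow> 'a"
  proof (intro exI ballI)
    fix t assume t: "t \<in> I"
    have "x (\<sigma> (g j)) * B (g j) (\<sigma> (g j)) * f j t = x (\<sigma> (g j)) * unit_vec (\<sigma> (g j)) t"
      if "j < m" for j
      unfolding f_def c_def using diag[OF gI[OF that]] by simp
    hence "(\<Sum>j<m. x (g j) * e j t + x (\<sigma> (g j)) * B (g j) (\<sigma> (g j)) * f j t)
        = (\<Sum>j<m. x (g j) * unit_vec (g j) t + x (\<sigma> (g j)) * unit_vec (\<sigma> (g j)) t)"
      unfolding e_def by (intro sum.cong) auto
    also have "\<dots> = x t" using sum_unit_vec_involution[OF g half inv_inv t] .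
    finally show "x t = (\<Sum>j<m. x (g j) * e j t + x (\<sigma> (g j)) * B (g j) (\<sigma> (g j)) * f j t)"
      by simp
  qed
  have forms: "bil I B (e j) (e k) = 0 \<and> bil I B (f j) (f k) = 0 \<and>
      bil I B (e j) (f k) = (if j = k then 1 else 0)" if j: "j < m" and k: "k < m" for j k
  proof (intro conjI)
    have \<sigma>I: "\<sigma> (g j) \<in> I" "\<sigma> (g k) \<in> I" using inv_in gI j k by auto
    have \<sigma>E: "\<sigma> (g j) \<notin> E" "\<sigma> (g k) \<notin> E" using half(2) gI gE j k by auto
    have "B (g j) (g k) = 0" using support[OF gI[OF j] gI[OF k]] gE[OF k] \<sigma>E by metis
    thus "bil I B (e j) (e k) = 0"
      unfolding e_def using bil_unit_vec[OF fin gI[OF j] gI[OF k], of B] by simp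
    have "B (\<sigma> (g j)) (\<sigma> (g k)) = 0" using support[OF \<sigma>I] gE[OF j] \<sigma>E inv_inv by metis
    thus "bil I B (f j) (f k) = 0"
      unfolding f_def using bil_unit_vec[OF fin \<sigma>I, of B]
      by (simp add: bil_scale_left bil_scale_right)
    have "bil I B (e j) (f k) = c k * B (g j) (\<sigma> (g k))"
      unfolding e_def f_def using bil_unit_vec[OF fin gI[OF j] \<sigma>I(2), of B]
      by (simp add: bil_scale_right)
    also have "\<dots> = (if j = k then 1 else 0)"
    proof (cases "j = k")
      case True
      thus ?thesis unfolding c_def using diag[OF gI[OF j]] by simp
    next
      case False
      hence "\<sigma> (g k) \<noteq> \<sigma> (g j)" using g_inj j k inv_inv by metis
      thus ?thesis using support[OF gI[OF j] \<sigma>I(2)] False by simp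
    qed
    finally show "bil I B (e j) (f k) = (if j = k then 1 else 0)" .
  qed
  show ?thesis unfolding hyperbolic_def using span forms by blast
qed

section \<open>Standard tableaux\<close>

abbreviation cell_le :: "nat \<times> nat \<Rightarrow> nat \<times> nat \<Rightarrow> bool" where
  "cell_le c c' \<equiv> fst c \<le> fst c' \<and> snd c \<le> snd c'"

definition transpose_tab :: "(nat \<times> nat) list \<Rightarrow> (nat \<times> nat) list" where
  "transpose_tab t = map prod.swap t"

lemma transpose_tab_transpose_tab[simp]: "transpose_tab (transpose_tab t) = t"
  unfolding transpose_tab_def by (simp add: comp_def)

lemma content_transpose_tab: "k < length t \<Longrightarrow> content (transpose_tab t ! k) = - content (t ! k)"
  unfolding transpose_tab_def content_def by simp

lemma transpose_tab_nth: "k < length t \<Longrightarrow> transpose_tab t ! k = prod.swap (t ! k)"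
  unfolding transpose_tab_def by simp

lemma transpose_tab_swap_tab:
  "Suc i < length t \<Longrightarrow> transpose_tab (swap_tab t i) = swap_tab (transpose_tab t) i"
  unfolding transpose_tab_def swap_tab_def by (auto simp: map_update)

lemma axial_transpose_tab: "Suc i < length t \<Longrightarrow> axial (transpose_tab t) i = - axial t i"
  unfolding axial_def by (simp add: content_transpose_tab)

lemma length_swap_tab[simp]: "length (swap_tab t i) = length t"
  unfolding swap_tab_def by simp

lemma swap_tab_nth: "Suc i < length t \<Longrightarrow>
  swap_tab t i ! k = (if k = i then t ! Suc i else if k = Suc i then t ! i else t ! k)"
  unfolding swap_tab_def by (auto simp: nth_list_update)

lemma swap_tab_swap_tab: "Suc i < length t \<Longrightarrow> swap_tab (swap_tab t i) i = t"
  by (rule nth_equalityI) (auto simp: swap_tab_nth)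

lemma axial_swap_tab: "Suc i < length t \<Longrightarrow> axial (swap_tab t i) i = - axial t i"
  unfolding axial_def by (simp add: swap_tab_nth)

locale young_shape =
  fixes n :: nat and lam :: "nat list"
  assumes n_pos: "0 < n" and part: "is_partition n lam"
begin

lemma partition_nth_antimono: "i < j \<Longrightarrow> j < length lam \<Longrightarrow> lam ! j \<le> lam ! i"
  using part unfolding is_partition_def by (simp add: sorted_wrt_iff_nth_less)

lemma partition_not_Nil: "lam \<noteq> []"
  using part n_pos unfolding is_partition_def by auto

lemma partition_nth_pos: "i < length lam \<Longrightarrow> 0 < lam ! i"
  using part unfolding is_partition_def by auto

lemma diagram_closed_up: "(a', b) \<in> diagram lam \<Longrightarrow> a \<le> a' \<Longrightarrow> (a, b) \<in> diagram lam"
proof -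
  assume h: "(a', b) \<in> diagram lam" and a: "a \<le> a'"
  hence a1: "a' < length lam" "b < lam ! a'" unfolding diagram_def by auto
  have "lam ! a' \<le> lam ! a" using partition_nth_antimono[of a a'] a a1 by (cases "a = a'") auto
  thus ?thesis using a1 a unfolding diagram_def by auto
qed

lemma diagram_closed_left: "(a, b') \<in> diagram lam \<Longrightarrow> b \<le> b' \<Longrightarrow> (a, b) \<in> diagram lam"
  unfolding diagram_def by auto

lemma origin_in_diagram: "(0,0) \<in> diagram lam"
  using partition_not_Nil partition_nth_pos unfolding diagram_def by auto

lemma partition_nth_le_hd: "i < length lam \<Longrightarrow> lam ! i \<le> hd lam"
  using partition_nth_antimono partition_not_Nil by (cases i) (auto simp: hd_conv_nth)

abbreviation "SYT \<equiv> syt n lam"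

lemma syt_length: "t \<in> SYT \<Longrightarrow> length t = n" unfolding syt_def by auto

lemma syt_distinct: "t \<in> SYT \<Longrightarrow> distinct t" unfolding syt_def by auto

lemma syt_set: "t \<in> SYT \<Longrightarrow> set t = diagram lam" unfolding syt_def by auto

lemma syt_standard: "t \<in> SYT \<Longrightarrow> k < n \<Longrightarrow> l < n \<Longrightarrow>
  fst (t ! k) \<le> fst (t ! l) \<Longrightarrow> snd (t ! k) \<le> snd (t ! l) \<Longrightarrow> k \<le> l"
  unfolding syt_def by auto

lemma syt_cell_index: "t \<in> SYT \<Longrightarrow> c \<in> diagram lam \<Longrightarrow> \<exists>p<n. t ! p = c"
  using syt_set syt_length by (metis in_set_conv_nth)

lemma syt_nth_in_diagram: "t \<in> SYT \<Longrightarrow> k < n \<Longrightarrow> t ! k \<in> diagram lam"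
  using syt_set syt_length by (metis nth_mem)

lemma syt_nth_inj: "t \<in> SYT \<Longrightarrow> k < n \<Longrightarrow> l < n \<Longrightarrow> t ! k = t ! l \<Longrightarrow> k = l"
  using syt_distinct syt_length by (metis nth_eq_iff_index_eq)

lemma finite_diagram: "finite (diagram lam)"
proof -
  have "diagram lam \<subseteq> {..<length lam} \<times> {..<hd lam}"
    unfolding diagram_def using partition_nth_le_hd by (auto, meson order_less_le_trans)
  thus ?thesis by (meson finite_SigmaI finite_lessThan finite_subset)
qed

lemma finite_syt: "finite SYT"
proof -
  have "SYT \<subseteq> {xs. set xs \<subseteq> diagram lam \<and> length xs = n}" unfolding syt_def by auto
  thus ?thesis using finite_lists_length_eq[OF finite_diagram] by (meson finite_subset)
qed

lemma syt_first_cell: "t \<in> SYT \<Longrightarrow> t ! 0 = (0, 0)"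
proof -
  assume t: "t \<in> SYT"
  obtain p where p: "p < n" "t ! p = (0, 0)" using syt_cell_index[OF t origin_in_diagram] by blast
  have "p \<le> 0" using syt_standard[OF t p(1), of 0] p n_pos by simp
  thus "t ! 0 = (0, 0)" using p by simp
qed

lemma swap_tab_neq: "t \<in> SYT \<Longrightarrow> Suc i < n \<Longrightarrow> swap_tab t i \<noteq> t"
proof
  assume t: "t \<in> SYT" and i: "Suc i < n" and e: "swap_tab t i = t"
  have "swap_tab t i ! i = t ! Suc i" using i syt_length[OF t] by (simp add: swap_tab_nth)
  hence "t ! i = t ! Suc i" using e by simp
  thus False using syt_nth_inj[OF t, of i "Suc i"] i by simp
qed

lemma swap_tab_in_syt_iff: "t \<in> SYT \<Longrightarrow> Suc i < n \<Longrightarrow>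
   swap_tab t i \<in> SYT \<longleftrightarrow> \<not> cell_le (t ! i) (t ! Suc i)"
proof
  assume t: "t \<in> SYT" and i: "Suc i < n" and s: "swap_tab t i \<in> SYT"
  show "\<not> cell_le (t ! i) (t ! Suc i)"
  proof
    assume "cell_le (t ! i) (t ! Suc i)"
    hence "cell_le (swap_tab t i ! Suc i) (swap_tab t i ! i)"
      using i syt_length[OF t] by (simp add: swap_tab_nth)
    thus False using syt_standard[OF s, of "Suc i" i] i by simp
  qed
next
  assume t: "t \<in> SYT" and i: "Suc i < n" and nc: "\<not> cell_le (t ! i) (t ! Suc i)"
  have L: "length t = n" using syt_length[OF t] .
  have "distinct (swap_tab t i)" using syt_distinct[OF t] i L unfolding swap_tab_def by simp
  moreover have "set (swap_tab t i) = diagram lam"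
    using syt_set[OF t] i L unfolding swap_tab_def by simp
  moreover have "\<forall>k<n. \<forall>l<n. cell_le (swap_tab t i ! k) (swap_tab t i ! l) \<longrightarrow> k \<le> l"
  proof (intro allI impI)
    fix k l assume k: "k < n" and l: "l < n"
      and le: "cell_le (swap_tab t i ! k) (swap_tab t i ! l)"
    define p where "p x = (if x = i then Suc i else if x = Suc i then i else x)" for x
    have pn: "p x < n" if "x < n" for x using that i unfolding p_def by auto
    have "swap_tab t i ! x = t ! p x" for x using i L unfolding p_def by (simp add: swap_tab_nth)
    hence "cell_le (t ! p k) (t ! p l)" using le by simp
    hence pkl: "p k \<le> p l" using syt_standard[OF t] pn k l by blast
    show "k \<le> l"
    proof (rule ccontr)
      assume "\<not> k \<le> l"
      hence "l < k" by simp
      with pkl have "k = Suc i \<and> l = i" unfolding p_def by (auto split: if_splits)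
      thus False using le nc i L by (simp add: swap_tab_nth)
    qed
  qed
  ultimately show "swap_tab t i \<in> SYT" unfolding syt_def using L by simp
qed

text \<open>The cell in the row of \<open>t ! k\<close> and the column of \<open>w ! k\<close> would be filled after position
  \<open>k\<close> in \<open>t\<close> but before it in \<open>w\<close>.\<close>
lemma syt_no_strict_dominance:
  assumes t: "t \<in> SYT" and w: "w \<in> SYT" and agree: "\<forall>j<k. t ! j = w ! j" and k: "k < n"
    and lt1: "fst (t ! k) < fst (w ! k)" and lt2: "snd (t ! k) < snd (w ! k)"
  shows False
proof -
  define c where "c = (fst (t ! k), snd (w ! k))"
  have "c \<in> diagram lam"
    unfolding c_def using diagram_closed_up[of "fst (w ! k)" "snd (w ! k)" "fst (t ! k)"]
      syt_nth_in_diagram[OF w k] lt1 by simp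
  then obtain p q where p: "p < n" "t ! p = c" and q: "q < n" "w ! q = c"
    using syt_cell_index t w by blast
  have "k \<le> p" using syt_standard[OF t k p(1)] p(2) lt2 unfolding c_def by simp
  have "q \<le> k" using syt_standard[OF w q(1) k] q(2) lt1 unfolding c_def by simp
  moreover have "q \<noteq> k"
  proof
    assume "q = k"
    hence "w ! k = c" using q(2) by simp
    hence "fst (w ! k) = fst c" by (rule arg_cong)
    hence "fst (w ! k) = fst (t ! k)" unfolding c_def by (simp only: fst_conv)
    thus False using lt1 by simp
  qed
  ultimately have "q < k" by simp
  hence "t ! q = c" using agree q by simp
  hence "q = p" using syt_nth_inj[OF t] p q by simp
  thus False using \<open>q < k\<close> \<open>k \<le> p\<close> by simp
qed

lemma syt_eq_if_contents_eq:
  assumes t: "t \<in> SYT" and w: "w \<in> SYT" and cc: "\<forall>k<n. content (t ! k) = content (w ! k)"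
  shows "t = w"
proof -
  have "t ! k = w ! k" if "k < n" for k
    using that
  proof (induction k rule: less_induct)
    case (less k)
    have agree: "\<forall>j<k. t ! j = w ! j" "\<forall>j<k. w ! j = t ! j" using less by auto
    have c: "int (snd (t ! k)) - int (fst (t ! k)) = int (snd (w ! k)) - int (fst (w ! k))"
      using cc less.prems unfolding content_def by simp
    show ?case
    proof (cases "fst (t ! k)" "fst (w ! k)" rule: linorder_cases)
      case less
      thus ?thesis using syt_no_strict_dominance[OF t w agree(1) \<open>k < n\<close>] c by simp
    next
      case equal
      thus ?thesis using c by (simp add: prod_eq_iff)
    next
      case greater
      thus ?thesis using syt_no_strict_dominance[OF w t agree(2) \<open>k < n\<close>] c by simp
    qed
  qed
  thus ?thesis using syt_length t w by (metis nth_equalityI)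
qed

lemma axial_if_swap_not_syt:
  "t \<in> SYT \<Longrightarrow> Suc i < n \<Longrightarrow> swap_tab t i \<notin> SYT \<Longrightarrow> axial t i = 1 \<or> axial t i = -1"
proof -
  assume t: "t \<in> SYT" and i: "Suc i < n" and ns: "swap_tab t i \<notin> SYT"
  obtain a b where ab: "t ! i = (a,b)" by fastforce
  obtain a' b' where ab': "t ! Suc i = (a',b')" by fastforce
  have le: "a \<le> a'" "b \<le> b'" using swap_tab_in_syt_iff[OF t i] ns ab ab' by auto
  have d': "(a',b') \<in> diagram lam" using syt_nth_in_diagram[OF t i] ab' by simp
  have only: "c = (a,b)"
    if h: "c \<in> diagram lam" "a \<le> fst c" "b \<le> snd c" "fst c \<le> a'" "snd c \<le> b'" "c \<noteq> (a',b')"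
    for c
  proof -
    obtain q where q: "q < n" "t ! q = c" using syt_cell_index[OF t h(1)] by blast
    have "q \<le> Suc i" using syt_standard[OF t q(1) i] q(2) ab' h by simp
    moreover have "q \<noteq> Suc i" using q ab' h by auto
    moreover have "i \<le> q" using syt_standard[OF t _ q(1), of i] i q(2) ab h by simp
    ultimately have "q = i" by simp
    thus ?thesis using q ab by simp
  qed
  have ne: "(a,b) \<noteq> (a',b')" using syt_nth_inj[OF t, of i "Suc i"] i ab ab' by auto
  show ?thesis
  proof (cases "a = a'")
    case True
    hence "b < b'" using ne le by auto
    have "(a, b' - 1) = (a,b)"
      using only[of "(a, b'-1)"] diagram_closed_left[OF d', of "b'-1"] True \<open>b < b'\<close> by auto
    hence "b' = Suc b" using \<open>b < b'\<close> by simp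
    thus ?thesis unfolding axial_def content_def using ab ab' True by simp
  next
    case False
    hence "a < a'" using le by simp
    have "(a' - 1, b') = (a,b)"
      using only[of "(a'-1, b')"] diagram_closed_up[OF d', of "a'-1"] \<open>a < a'\<close> le by auto
    hence "a' = Suc a" "b' = b" using \<open>a < a'\<close> by auto
    thus ?thesis unfolding axial_def content_def using ab ab' by simp
  qed
qed

lemma axial_nonzero: assumes t: "t \<in> SYT" and i: "Suc i < n" shows "axial t i \<noteq> 0"
proof
  assume ax: "axial t i = 0"
  obtain a b where ab: "t ! i = (a,b)" by fastforce
  obtain a' b' where ab': "t ! Suc i = (a',b')" by fastforce
  have c: "int b' - int a' = int b - int a" using ax ab ab' unfolding axial_def content_def by simp
  have ne: "(a,b) \<noteq> (a',b')" using syt_nth_inj[OF t, of i "Suc i"] i ab ab' by auto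
  show False
  proof (cases "a' \<le> a")
    case True
    hence "b' \<le> b" using c by simp
    thus False using syt_standard[OF t i, of i] True ab ab' i by simp
  next
    case False
    hence lt: "a < a'" "b < b'" using c by auto
    have d': "(a',b') \<in> diagram lam" using syt_nth_in_diagram[OF t i] ab' by simp
    have "(a, b') \<in> diagram lam" using diagram_closed_up[OF d', of a] lt by simp
    hence "(a, Suc b) \<in> diagram lam" using diagram_closed_left[of a b' "Suc b"] lt by simp
    then obtain q where q: "q < n" "t ! q = (a, Suc b)" using syt_cell_index[OF t] by blast
    have "i \<le> q" using syt_standard[OF t _ q(1), of i] i q(2) ab by simp
    moreover have "q \<noteq> i" using q ab by auto
    moreover have "q \<le> Suc i" using syt_standard[OF t q(1) i] q(2) ab' lt by simp
    moreover have "q \<noteq> Suc i" using q ab' lt by auto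
    ultimately show False by simp
  qed
qed

lemma swap_tab_towards_in_syt:
  assumes t: "t \<in> SYT" and w: "w \<in> SYT" and agree: "\<forall>j<p. t ! j = w ! j"
    and pi: "p \<le> i" and i: "Suc i < n" and ti: "t ! Suc i = w ! p"
  shows "swap_tab t i \<in> SYT"
proof -
  have pn: "p < n" using pi i by simp
  have "\<not> cell_le (t ! i) (t ! Suc i)"
  proof
    assume le: "cell_le (t ! i) (t ! Suc i)"
    obtain q where q: "q < n" "w ! q = t ! i"
      using syt_cell_index[OF w syt_nth_in_diagram[OF t]] i by (meson Suc_lessD)
    have "q \<le> p" using syt_standard[OF w q(1) pn] q(2) le ti by simp
    moreover have "q \<noteq> p"
    proof
      assume "q = p"
      hence "t ! i = t ! Suc i" using q ti by simp
      thus False using syt_nth_inj[OF t, of i "Suc i"] i by simp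
    qed
    ultimately have "q < p" by simp
    hence "t ! q = t ! i" using agree q by simp
    hence "q = i" using syt_nth_inj[OF t] q i by simp
    thus False using \<open>q < p\<close> pi by simp
  qed
  thus ?thesis using swap_tab_in_syt_iff[OF t i] by simp
qed

lemma syt_swap_extend_prefix:
  assumes closed: "\<And>t i. t \<in> SYT \<Longrightarrow> Suc i < n \<Longrightarrow> swap_tab t i \<in> SYT \<Longrightarrow> P (swap_tab t i) \<Longrightarrow> P t"
    and w: "w \<in> SYT" and pn: "p < n"
    and longer: "\<And>t. t \<in> SYT \<Longrightarrow> \<forall>j\<le>p. t ! j = w ! j \<Longrightarrow> P t"
    and t: "t \<in> SYT" and agree: "\<forall>j<p. t ! j = w ! j"
  shows "P t"
proof -
  have bubble: "t \<in> SYT \<Longrightarrow> \<forall>j<p. t ! j = w ! j \<Longrightarrow> p + m < n \<Longrightarrow> t ! (p + m) = w ! p \<Longrightarrow> P t"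
    for m t
  proof (induction m arbitrary: t)
    case 0
    hence "\<forall>j\<le>p. t ! j = w ! j" by (metis add_0_right le_neq_implies_less)
    thus ?case using longer[OF "0.prems"(1)] by blast
  next
    case (Suc m)
    define i where "i = p + m"
    have i: "Suc i < n" and ti: "t ! Suc i = w ! p" using Suc.prems i_def by simp_all
    have s: "swap_tab t i \<in> SYT"
      using swap_tab_towards_in_syt[OF Suc.prems(1) w Suc.prems(2) _ i ti] i_def by simp
    have L: "length t = n" using syt_length[OF Suc.prems(1)] .
    have "\<forall>j<p. swap_tab t i ! j = w ! j" using Suc.prems(2) L i i_def by (simp add: swap_tab_nth)
    moreover have "swap_tab t i ! (p + m) = w ! p" using ti L i i_def by (simp add: swap_tab_nth)
    ultimately have "P (swap_tab t i)" using Suc.IH[OF s] i i_def by simp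
    thus ?case using closed[OF Suc.prems(1) i s] by simp
  qed
  obtain q where q: "q < n" "t ! q = w ! p"
    using syt_cell_index[OF t syt_nth_in_diagram[OF w pn]] by blast
  have "p \<le> q"
  proof (rule ccontr)
    assume "\<not> p \<le> q"
    hence "w ! q = w ! p" using agree q by simp
    thus False using syt_nth_inj[OF w q(1) pn] \<open>\<not> p \<le> q\<close> by simp
  qed
  then obtain m where "q = p + m" using le_Suc_ex by blast
  thus ?thesis using bubble[OF t agree] q by simp
qed

text \<open>Connectivity of the swap graph: fix the entries of \<open>w\<close> one position at a time, moving each
  into place by adjacent swaps.\<close>
lemma syt_swap_induct:
  assumes closed: "\<And>t i. t \<in> SYT \<Longrightarrow> Suc i < n \<Longrightarrow> swap_tab t i \<in> SYT \<Longrightarrow> P (swap_tab t i) \<Longrightarrow> P t"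
    and w: "w \<in> SYT" and Pw: "P w" and t: "t \<in> SYT"
  shows "P t"
proof -
  have "\<forall>t\<in>SYT. (\<forall>j<n - d. t ! j = w ! j) \<longrightarrow> P t" for d
  proof (induction d)
    case 0
    have "t = w" if "t \<in> SYT" "\<forall>j<n. t ! j = w ! j" for t
      using that syt_length[OF that(1)] syt_length[OF w] by (intro nth_equalityI) simp_all
    thus ?case using Pw by auto
  next
    case (Suc d)
    show ?case
    proof (cases "d < n")
      case False
      thus ?thesis using Suc.IH by simp
    next
      case True
      have "n - d = Suc (n - Suc d)" using True by linarith
      hence "P t" if "t \<in> SYT" "\<forall>j\<le>n - Suc d. t ! j = w ! j" for t
        using Suc.IH that by (simp add: less_Suc_eq_le)
      thus ?thesis
        using syt_swap_extend_prefix[where P = P, OF closed w, where p = "n - Suc d"] True by auto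
    qed
  qed
  from this[of n] show ?thesis using t by simp
qed

section \<open>Young's seminormal form\<close>

definition swap_coeff :: "(nat \<times> nat) list \<Rightarrow> nat \<Rightarrow> Qs" where
  "swap_coeff t i = (if swap_tab t i \<in> SYT then
     (if 0 < axial t i then 1 else 1 + qdiag (axial t i) * qdiag (- axial t i)) else 0)"

lemma hecke_gen_eq: "t \<in> SYT \<Longrightarrow> Suc i < n \<Longrightarrow>
  hecke_gen n lam i v t
    = qdiag (axial t i) * unit_vec t v + swap_coeff t i * unit_vec (swap_tab t i) v"
  using swap_tab_neq[of t i] unfolding hecke_gen_def swap_coeff_def unit_vec_def by auto

lemma hecke_act_unit_vec: "t \<in> SYT \<Longrightarrow> Suc i < n \<Longrightarrow>
  mat_act SYT (hecke_gen n lam i) (unit_vec t)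
    = (\<lambda>v. qdiag (axial t i) * unit_vec t v + swap_coeff t i * unit_vec (swap_tab t i) v)"
  unfolding mat_act_def using finite_syt by (simp add: sum_mult_unit_vec hecke_gen_eq[symmetric])

lemma swap_coeff_mult_swap:
  assumes t: "t \<in> SYT" and i: "Suc i < n" and s: "swap_tab t i \<in> SYT"
  shows "swap_coeff t i * swap_coeff (swap_tab t i) i = 1 + qdiag (axial t i) * qdiag (- axial t i)"
proof -
  have L: "length t = n" using syt_length[OF t] .
  have "swap_tab (swap_tab t i) i = t" "axial (swap_tab t i) i = - axial t i"
    using swap_tab_swap_tab axial_swap_tab L i by simp_all
  thus ?thesis using s t qdiag_zero unfolding swap_coeff_def
    by (cases "0 < axial t i"; cases "axial t i = 0") (simp_all add: mult.commute)
qed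

definition jm_eigenvalue :: "nat \<Rightarrow> (nat \<times> nat) list \<Rightarrow> Qs" where
  "jm_eigenvalue k t = s_ind powi (2 * content (t ! k))"

lemma jm_eigenvalue_Suc:
  "jm_eigenvalue (Suc k) t = jm_eigenvalue k t * s_ind powi (2 * axial t k)"
  unfolding jm_eigenvalue_def axial_def using s_ind_nonzero
  by (simp add: power_int_add[symmetric] algebra_simps)

lemma jm_eigenvalue_swap_tab:
  "Suc k < length t \<Longrightarrow> jm_eigenvalue k (swap_tab t k) = jm_eigenvalue (Suc k) t"
  unfolding jm_eigenvalue_def by (simp add: swap_tab_nth)

lemma hecke_gen_sandwich:
  assumes v: "v \<in> SYT" and k: "Suc k < n"
  shows "(\<Sum>t\<in>SYT. hecke_gen n lam k u t * D t * hecke_gen n lam k t v)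
    = hecke_gen n lam k u v * D v * qdiag (axial v k)
      + (if swap_tab v k \<in> SYT
         then hecke_gen n lam k u (swap_tab v k) * D (swap_tab v k) * swap_coeff v k else 0)"
proof -
  have "(\<Sum>t\<in>SYT. hecke_gen n lam k u t * D t * hecke_gen n lam k t v)
      = (\<Sum>t\<in>SYT. (hecke_gen n lam k u t * D t * qdiag (axial v k)) * unit_vec v t
           + (hecke_gen n lam k u t * D t * swap_coeff v k) * unit_vec (swap_tab v k) t)"
    by (intro sum.cong refl) (simp add: hecke_gen_eq[OF v k] algebra_simps)
  thus ?thesis using finite_syt v by (simp add: sum.distrib sum_mult_unit_vec)
qed

text \<open>The matrix identity \<open>\<sigma>_k L_k \<sigma>_k = L_(k+1)\<close> for the diagonal matrices
  \<open>L_k = diag (jm_eigenvalue k)\<close>; on the two-dimensional blocks it reduces to \<open>qdiag_uminus\<close>.\<close>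
lemma hecke_gen_conj_jm_entry:
  assumes u: "u \<in> SYT" and v: "v \<in> SYT" and k: "Suc k < n"
  shows "(\<Sum>t\<in>SYT. hecke_gen n lam k u t * jm_eigenvalue k t * hecke_gen n lam k t v)
    = (if u = v then jm_eigenvalue (Suc k) u else 0)"
proof -
  define M where "M = hecke_gen n lam k"
  define v2 where "v2 = swap_tab v k"
  define d where "d = axial v k"
  define E where "E = jm_eigenvalue k v"
  define X where "X = s_ind powi (2 * d)"
  have L: "length v = n" using syt_length[OF v] .
  have Muv: "M u v = qdiag d * unit_vec v u + swap_coeff v k * unit_vec v2 u"
    unfolding M_def d_def v2_def using hecke_gen_eq[OF v k] .
  have sum_eq: "(\<Sum>t\<in>SYT. M u t * jm_eigenvalue k t * M t v) = M u v * E * qdiag d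
      + (if v2 \<in> SYT then M u v2 * jm_eigenvalue k v2 * swap_coeff v k else 0)"
    unfolding M_def E_def v2_def d_def by (rule hecke_gen_sandwich[OF v k])
  have E_Suc: "jm_eigenvalue (Suc k) v = E * X"
    unfolding E_def X_def d_def by (rule jm_eigenvalue_Suc)
  show ?thesis
  proof (cases "v2 \<in> SYT")
    case True
    have ne: "v2 \<noteq> v" unfolding v2_def using swap_tab_neq[OF v k] .
    have E_v2: "jm_eigenvalue k v2 = E * X"
      unfolding v2_def using jm_eigenvalue_swap_tab L k E_Suc by simp
    have "swap_tab v2 k = v" "axial v2 k = - d"
      unfolding v2_def d_def using swap_tab_swap_tab axial_swap_tab L k by simp_all
    hence Mu_v2: "M u v2 = qdiag (- d) * unit_vec v2 u + swap_coeff v2 k * unit_vec v u"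
      unfolding M_def using hecke_gen_eq[OF True k] by simp
    have coeffs: "swap_coeff v k * swap_coeff v2 k = 1 + qdiag d * qdiag (- d)"
      unfolding v2_def d_def using swap_coeff_mult_swap[OF v k] True v2_def by simp
    have rel: "qdiag d + X * qdiag (- d) = 0" unfolding X_def by (rule qdiag_uminus)
    consider "u = v" | "u = v2" | "u \<noteq> v" "u \<noteq> v2" by blast
    thus ?thesis
    proof cases
      case 1
      have "M u v * E * qdiag d + M u v2 * jm_eigenvalue k v2 * swap_coeff v k
          = E * X + qdiag d * E * (qdiag d + X * qdiag (- d))"
        using 1 ne Muv Mu_v2 E_v2 coeffs by (simp add: unit_vec_def algebra_simps)
      thus ?thesis using sum_eq 1 True E_Suc rel unfolding M_def by simp
    next
      case 2
      have "M u v * E * qdiag d + M u v2 * jm_eigenvalue k v2 * swap_coeff v k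
          = swap_coeff v k * E * (qdiag d + X * qdiag (- d))"
        using 2 ne Muv Mu_v2 E_v2 by (simp add: unit_vec_def algebra_simps)
      thus ?thesis using sum_eq 2 ne True rel unfolding M_def by simp
    next
      case 3
      have "M u v = 0" "M u v2 = 0" using Muv Mu_v2 3 by (simp_all add: unit_vec_def)
      thus ?thesis using sum_eq 3 unfolding M_def by simp
    qed
  next
    case False
    have "swap_coeff v k = 0" unfolding swap_coeff_def using False v2_def by simp
    hence Muv': "M u v = qdiag d * unit_vec v u" using Muv by simp
    have "qdiag d * qdiag d = X"
      unfolding X_def d_def
      using qdiag_square_if_unit axial_if_swap_not_syt[OF v k] False v2_def by simp
    thus ?thesis using sum_eq False Muv' E_Suc unfolding M_def by (simp add: unit_vec_def)
  qed
qed

abbreviation "act i \<equiv> mat_act SYT (hecke_gen n lam i)"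

text \<open>\<open>jucys_murphy k\<close> is the action of \<open>L_(k+1)\<close> (positions are 0-based).\<close>
fun jucys_murphy :: "nat \<Rightarrow> ((nat \<times> nat) list \<Rightarrow> Qs) \<Rightarrow> ((nat \<times> nat) list \<Rightarrow> Qs)" where
  "jucys_murphy 0 x = x"
| "jucys_murphy (Suc k) x = act k (jucys_murphy k (act k x))"

lemma jucys_murphy_eigen:
  "k < n \<Longrightarrow> u \<in> SYT \<Longrightarrow> jucys_murphy k x u = jm_eigenvalue k u * x u"
proof (induction k arbitrary: x u)
  case 0
  show ?case using syt_first_cell[OF "0.prems"(2)] by (simp add: jm_eigenvalue_def content_def)
next
  case (Suc k)
  note k = \<open>Suc k < n\<close> and u = \<open>u \<in> SYT\<close>
  define M where "M = hecke_gen n lam k"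
  have "jucys_murphy (Suc k) x u = (\<Sum>t\<in>SYT. M u t * jucys_murphy k (act k x) t)"
    by (simp add: mat_act_def M_def)
  also have "\<dots> = (\<Sum>t\<in>SYT. M u t * (jm_eigenvalue k t * (\<Sum>v\<in>SYT. M t v * x v)))"
    using Suc.IH k by (intro sum.cong refl) (simp add: mat_act_def M_def)
  also have "\<dots> = (\<Sum>t\<in>SYT. \<Sum>v\<in>SYT. (M u t * jm_eigenvalue k t * M t v) * x v)"
    by (simp add: sum_distrib_left algebra_simps)
  also have "\<dots> = (\<Sum>v\<in>SYT. (\<Sum>t\<in>SYT. M u t * jm_eigenvalue k t * M t v) * x v)"
    by (subst sum.swap) (simp add: sum_distrib_right)
  also have "\<dots> = (\<Sum>v\<in>SYT. (if u = v then jm_eigenvalue (Suc k) u else 0) * x v)"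
    using hecke_gen_conj_jm_entry[OF u _ k] by (intro sum.cong refl) (simp add: M_def)
  also have "\<dots> = (\<Sum>v\<in>SYT. if v = u then jm_eigenvalue (Suc k) u * x u else 0)"
    by (intro sum.cong refl) auto
  also have "\<dots> = jm_eigenvalue (Suc k) u * x u" using u finite_syt by (simp add: sum.delta')
  finally show ?case .
qed

end

locale self_conjugate_shape = young_shape +
  assumes n2: "2 \<le> n" and conj: "conj_partition lam = lam"
begin

lemma diagram_transpose: "(a, b) \<in> diagram lam \<Longrightarrow> (b, a) \<in> diagram lam"
proof -
  assume h: "(a, b) \<in> diagram lam"
  hence a: "a < length lam" and b: "b < lam ! a" unfolding diagram_def by auto
  have bh: "b < hd lam" using partition_nth_le_hd[OF a] b by simp
  have cl: "conj_partition lam ! b = length (filter (\<lambda>r. b < r) lam)"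
    unfolding conj_partition_def using partition_not_Nil bh by simp
  have len: "length (conj_partition lam) = hd lam"
    unfolding conj_partition_def using partition_not_Nil by simp
  have all: "\<forall>x\<in>set (take (Suc a) lam). b < x"
  proof
    fix x assume "x \<in> set (take (Suc a) lam)"
    then obtain p where p: "p < length (take (Suc a) lam)" "x = take (Suc a) lam ! p"
      by (metis in_set_conv_nth)
    hence pa: "p \<le> a" "x = lam ! p" by auto
    have "lam ! a \<le> lam ! p" using pa a partition_nth_antimono by (cases "p = a") auto
    thus "b < x" using b pa by simp
  qed
  have "length (filter (\<lambda>r. b < r) (take (Suc a) lam)) = Suc a"
    using all a by simp
  moreover have "length (filter (\<lambda>r. b < r) (take (Suc a) lam)) \<le> length (filter (\<lambda>r. b < r) lam)"
    by (metis append_take_drop_id filter_append le_add1 length_append)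
  ultimately have "a < conj_partition lam ! b" using cl by simp
  hence "(b, a) \<in> diagram (conj_partition lam)" unfolding diagram_def using len bh by simp
  thus ?thesis using conj by simp
qed

lemma transpose_tab_in_syt: "t \<in> SYT \<Longrightarrow> transpose_tab t \<in> SYT"
proof -
  assume t: "t \<in> SYT"
  have sw: "prod.swap ` diagram lam = diagram lam"
  proof
    show "prod.swap ` diagram lam \<subseteq> diagram lam" using diagram_transpose by auto
    show "diagram lam \<subseteq> prod.swap ` diagram lam"
    proof
      fix x assume "x \<in> diagram lam"
      hence "prod.swap x \<in> diagram lam" using diagram_transpose by (cases x) auto
      moreover have "x = prod.swap (prod.swap x)" by simp
      ultimately show "x \<in> prod.swap ` diagram lam" by blast
    qed
  qed
  have "set (transpose_tab t) = diagram lam"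
    using syt_set[OF t] sw unfolding transpose_tab_def by simp
  moreover have "distinct (transpose_tab t)" using syt_distinct[OF t] unfolding transpose_tab_def
    by (simp add: distinct_map swap_inj_on)
  moreover have "length (transpose_tab t) = n"
    using syt_length[OF t] unfolding transpose_tab_def by simp
  moreover have "\<forall>k<n. \<forall>l<n. cell_le (transpose_tab t ! k) (transpose_tab t ! l) \<longrightarrow> k \<le> l"
    using syt_standard[OF t] syt_length[OF t] unfolding transpose_tab_def by auto
  ultimately show ?thesis unfolding syt_def by blast
qed

lemma syt_second_cell: "t \<in> SYT \<Longrightarrow> t ! 1 = (0,1) \<or> t ! 1 = (1,0)"
proof -
  assume t: "t \<in> SYT"
  note first = syt_first_cell[OF t]
  have n1: "1 < n" using n2 by simp
  obtain a b where ab: "t ! 1 = (a,b)" by fastforce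
  have ne: "(a,b) \<noteq> (0,0)"
  proof
    assume "(a,b) = (0,0)"
    hence "t ! 0 = t ! 1" using first ab by simp
    thus False using syt_nth_inj[OF t, of 0 1] n1 by simp
  qed
  have only: "c = (0,0)" if h: "c \<in> diagram lam" "fst c \<le> a" "snd c \<le> b" "c \<noteq> (a,b)" for c
  proof -
    obtain q where q: "q < n" "t ! q = c" using syt_cell_index[OF t h(1)] by blast
    have "q \<le> 1" using syt_standard[OF t q(1) n1] q(2) ab h by simp
    moreover have "q \<noteq> 1" using q ab h by auto
    ultimately have "q = 0" by simp
    thus ?thesis using q first by simp
  qed
  have abd: "(a,b) \<in> diagram lam" using syt_nth_in_diagram[OF t n1] ab by simp
  show ?thesis
  proof (cases "a = 0")
    case True
    hence "b \<ge> 1" using ne by simp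
    have "(0, b - 1) = (0,0)"
      using only[of "(0, b-1)"] diagram_closed_left[OF abd, of "b-1"] True \<open>b \<ge> 1\<close> by auto
    thus ?thesis using ab True \<open>b \<ge> 1\<close> by simp
  next
    case False
    have "(a - 1, b) = (0,0)"
      using only[of "(a-1, b)"] diagram_closed_up[OF abd, of "a-1"] False by auto
    hence "a = 1" "b = 0" using False by auto
    thus ?thesis using ab by simp
  qed
qed

end

section \<open>Forms of sign type\<close>

locale eps_invariant_form = self_conjugate_shape +
  fixes B :: "(nat \<times> nat) list \<Rightarrow> (nat \<times> nat) list \<Rightarrow> Qs"
  assumes eps_inv: "\<forall>i < n - 1. \<forall>x y.
        bil (syt n lam) B (mat_act (syt n lam) (hecke_gen n lam i) x)
                          (mat_act (syt n lam) (hecke_gen n lam i) y)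
        = - bil (syt n lam) B x y"
begin

lemma bil_jucys_murphy:
  "k < n \<Longrightarrow> bil SYT B (jucys_murphy k x) (jucys_murphy k y) = bil SYT B x y"
proof (induction k arbitrary: x y)
  case (Suc k)
  hence k: "k < n - 1" by simp
  have "bil SYT B (jucys_murphy (Suc k) x) (jucys_murphy (Suc k) y)
      = - bil SYT B (jucys_murphy k (act k x)) (jucys_murphy k (act k y))"
    using eps_inv k by simp
  also have "\<dots> = - bil SYT B (act k x) (act k y)" using Suc by simp
  also have "\<dots> = bil SYT B x y" using eps_inv k by simp
  finally show ?case .
qed simp

lemma form_support:
  assumes t: "t \<in> SYT" and u: "u \<in> SYT" and nz: "B t u \<noteq> 0"
  shows "u = transpose_tab t"
proof -
  have "content (u ! k) = content (transpose_tab t ! k)" if k: "k < n" for k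
  proof -
    have "bil SYT B (jucys_murphy k (unit_vec t)) (jucys_murphy k (unit_vec u))
        = bil SYT B (\<lambda>v. jm_eigenvalue k t * unit_vec t v) (\<lambda>v. jm_eigenvalue k u * unit_vec u v)"
      using jucys_murphy_eigen[OF k] by (intro bil_cong) (auto simp: unit_vec_def)
    also have "\<dots> = jm_eigenvalue k t * jm_eigenvalue k u * B t u"
      by (simp add: bil_scale_left bil_scale_right bil_unit_vec[OF finite_syt t u, of B])
    finally have "jm_eigenvalue k t * jm_eigenvalue k u * B t u = B t u"
      using bil_jucys_murphy[OF k] bil_unit_vec[OF finite_syt t u, of B] by simp
    hence "jm_eigenvalue k t * jm_eigenvalue k u = 1" using nz by simp
    hence "s_ind powi (2 * content (t ! k) + 2 * content (u ! k)) = 1"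
      unfolding jm_eigenvalue_def using s_ind_nonzero by (simp add: power_int_add)
    hence "2 * content (t ! k) + 2 * content (u ! k) = 0" by (rule s_ind_powi_eq_1)
    thus ?thesis using content_transpose_tab syt_length[OF t] k by simp
  qed
  thus ?thesis using syt_eq_if_contents_eq[OF u transpose_tab_in_syt[OF t]] by simp
qed

lemma form_diag_swap:
  assumes t: "t \<in> SYT" and i: "Suc i < n" and t2: "swap_tab t i \<in> SYT" and pos: "0 < axial t i"
  shows "B t (transpose_tab t) + B (swap_tab t i) (transpose_tab (swap_tab t i)) = 0"
proof -
  define t2 where "t2 = swap_tab t i"
  define d where "d = axial t i"
  define u where "u = transpose_tab t2"
  have L: "length t = n" using syt_length[OF t] .
  have t2I: "t2 \<in> SYT" using t2 t2_def by simp
  have uI: "u \<in> SYT" using transpose_tab_in_syt[OF t2I] u_def by simp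
  have tI: "transpose_tab t \<in> SYT" using transpose_tab_in_syt[OF t] .
  have ne: "t2 \<noteq> t" unfolding t2_def using swap_tab_neq[OF t i] .
  have u_eq: "u = swap_tab (transpose_tab t) i"
    unfolding u_def t2_def using transpose_tab_swap_tab L i by simp
  have swap_u: "swap_tab u i = transpose_tab t"
    unfolding u_eq
      using swap_tab_swap_tab[of i "transpose_tab t"] L i by (simp add: transpose_tab_def)
  have axial_u: "axial u i = d"
    unfolding u_eq d_def
      using axial_swap_tab[of i "transpose_tab t"] axial_transpose_tab[of i t] L i
    by (simp add: transpose_tab_def)
  have act_t: "act i (unit_vec t) = (\<lambda>v. qdiag d * unit_vec t v + 1 * unit_vec t2 v)"
    using hecke_act_unit_vec[OF t i] t2 pos unfolding d_def t2_def swap_coeff_def by simp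
  have act_u: "act i (unit_vec u) = (\<lambda>v. qdiag d * unit_vec u v + 1 * unit_vec (transpose_tab t) v)"
    using hecke_act_unit_vec[OF uI i] swap_u tI axial_u pos unfolding d_def swap_coeff_def by simp
  have z1: "B t u = 0"
    using form_support[OF t uI] ne unfolding u_def by (metis transpose_tab_transpose_tab)
  have z2: "B t2 (transpose_tab t) = 0"
    using form_support[OF t2I tI] ne by (metis transpose_tab_transpose_tab)
  have "0 = - bil SYT B (unit_vec t) (unit_vec u)"
    using bil_unit_vec[OF finite_syt t uI, of B] z1 by simp
  also have "\<dots> = bil SYT B (act i (unit_vec t)) (act i (unit_vec u))" using eps_inv i by simp
  also have "\<dots> = qdiag d * (qdiag d * B t u + B t (transpose_tab t))
      + (qdiag d * B t2 u + B t2 (transpose_tab t))"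
    unfolding act_t act_u bil_linear_left bil_linear_right
    using bil_unit_vec[OF finite_syt, of _ _ B] t t2I uI tI by simp
  also have "\<dots> = qdiag d * (B t (transpose_tab t) + B t2 u)"
    using z1 z2 by (simp add: algebra_simps)
  finally have "qdiag d * (B t (transpose_tab t) + B t2 u) = 0" by simp
  moreover have "qdiag d \<noteq> 0" using qdiag_nonzero pos d_def by simp
  ultimately show ?thesis unfolding u_def t2_def by simp
qed

lemma form_diag_swap_zero_iff:
  assumes t: "t \<in> SYT" and i: "Suc i < n" and t2: "swap_tab t i \<in> SYT"
  shows "B t (transpose_tab t) = 0 \<longleftrightarrow> B (swap_tab t i) (transpose_tab (swap_tab t i)) = 0"
proof (cases "0 < axial t i")
  case True
  thus ?thesis using form_diag_swap[OF t i t2] by (auto simp: add_eq_0_iff)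
next
  case False
  have L: "length t = n" using syt_length[OF t] .
  have ne: "axial t i \<noteq> 0" using axial_nonzero[OF t i] .
  have "0 < axial (swap_tab t i) i" using axial_swap_tab[of i t] L i False ne by simp
  moreover have "swap_tab (swap_tab t i) i = t" using swap_tab_swap_tab L i by simp
  ultimately have "B (swap_tab t i) (transpose_tab (swap_tab t i)) + B t (transpose_tab t) = 0"
    using form_diag_swap[OF t2 i] t by simp
  thus ?thesis by (auto simp: add_eq_0_iff)
qed

lemma form_diag_nonzero:
  assumes nz: "\<exists>t\<in>SYT. \<exists>u\<in>SYT. B t u \<noteq> 0"
  shows "\<forall>t\<in>SYT. B t (transpose_tab t) \<noteq> 0"
proof (rule ccontr)
  assume "\<not> (\<forall>t\<in>SYT. B t (transpose_tab t) \<noteq> 0)"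
  then obtain w where w: "w \<in> SYT" "B w (transpose_tab w) = 0" by blast
  have all: "B t (transpose_tab t) = 0" if t: "t \<in> SYT" for t
    using syt_swap_induct[where P = "\<lambda>t. B t (transpose_tab t) = 0", OF _ w t]
      form_diag_swap_zero_iff by blast
  from nz obtain t u where tu: "t \<in> SYT" "u \<in> SYT" "B t u \<noteq> 0" by blast
  hence "u = transpose_tab t" using form_support by blast
  thus False using all[OF tu(1)] tu(3) by simp
qed

lemma form_hyperbolic:
  assumes nz: "\<exists>t\<in>SYT. \<exists>u\<in>SYT. B t u \<noteq> 0"
  shows "hyperbolic SYT B"
proof (rule hyperbolic_if_supported_on_involution)
  let ?E = "{t \<in> SYT. t ! 1 = (0, 1)}"
  show "?E \<subseteq> SYT" by blast
  show "transpose_tab t \<in> ?E \<longleftrightarrow> t \<notin> ?E" if t: "t \<in> SYT" for t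
  proof -
    have "transpose_tab t ! 1 = prod.swap (t ! 1)"
      using syt_length[OF t] n2 by (simp add: transpose_tab_nth)
    thus ?thesis using syt_second_cell[OF t] transpose_tab_in_syt[OF t] t by auto
  qed
qed (use finite_syt transpose_tab_in_syt form_support form_diag_nonzero[OF nz] in auto)

end

theorem mainTheorem14:
  fixes n :: nat and lam :: "nat list" and B :: "(nat \<times> nat) list \<Rightarrow> (nat \<times> nat) list \<Rightarrow> Qs"
  assumes "n \<ge> 2"
    and "is_partition n lam"
    and "conj_partition lam = lam"
    and symm: "\<forall>t\<in>syt n lam. \<forall>u\<in>syt n lam. B t u = B u t"
    and nonzero: "\<exists>t\<in>syt n lam. \<exists>u\<in>syt n lam. B t u \<noteq> 0"
    and eps_inv: "\<forall>i < n - 1. \<forall>x y.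
        bil (syt n lam) B (mat_act (syt n lam) (hecke_gen n lam i) x)
                          (mat_act (syt n lam) (hecke_gen n lam i) y)
        = - bil (syt n lam) B x y"
  shows "hyperbolic (syt n lam) B"
proof -
  interpret eps_invariant_form n lam B
    by unfold_locales (use assms in auto)
  show ?thesis using form_hyperbolic nonzero by blast
qed

end
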